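(* There exists a recursive subset $\mathcal{A}\subseteq\mathbb{Z}$ which is closed in the profinite topology of $\mathbb{Z}$ and such that the function $n\mapsto\mathcal{A}\bmod n$ (for $n\ge1$) is not recursive.
   Context: $\mathcal{A}\bmod n=\{r\in\{0,\dots,n-1\}:\exists x\in\mathcal{A},\ x\equiv r\bmod n\}$. The profinite topology on $\mathbb{Z}$ has as basis of open sets the arithmetic progressions $m+p\mathbb{Z}$ ($m\in\mathbb{Z}$, $p\ge1$). *)

theory Defs
  imports Main "HOL-Library.Nat_Bijection"
begin

datatype recf = Zero | Succ | Proj nat | Comp recf "recf list" | Prim recf recf | Mu recf

text \<open>Big-step evaluation; arities are implicit (extra arguments are ignored).\<close>
inductive eval :: "recf \<Rightarrow> nat list \<Rightarrow> nat \<Rightarrow> bool" where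
  eval_zero: "eval Zero xs 0"
| eval_succ: "eval Succ (x # xs) (Suc x)"
| eval_proj: "i < length xs \<Longrightarrow> eval (Proj i) xs (xs ! i)"
| eval_comp: "list_all2 (\<lambda>g y. eval g xs y) gs ys \<Longrightarrow> eval f ys z \<Longrightarrow> eval (Comp f gs) xs z"
| eval_prim0: "eval f xs y \<Longrightarrow> eval (Prim f g) (0 # xs) y"
| eval_primS: "eval (Prim f g) (n # xs) y \<Longrightarrow> eval g (n # y # xs) z \<Longrightarrow> eval (Prim f g) (Suc n # xs) z"
| eval_mu: "eval f (n # xs) 0 \<Longrightarrow> (\<forall>m<n. \<exists>y. y > 0 \<and> eval f (m # xs) y) \<Longrightarrow> eval (Mu f) xs n"

definition recursive_fun :: "(nat \<Rightarrow> nat) \<Rightarrow> bool" where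
  "recursive_fun f \<longleftrightarrow> (\<exists>c. \<forall>n. eval c [n] (f n))"

definition recursive_int_set :: "int set \<Rightarrow> bool" where
  "recursive_int_set A \<longleftrightarrow> recursive_fun (\<lambda>k. if int_decode k \<in> A then 1 else 0)"

definition profinite_open :: "int set \<Rightarrow> bool" where
  "profinite_open U \<longleftrightarrow>
     (\<forall>x\<in>U. \<exists>m p. p \<ge> 1 \<and> x \<in> {m + p * k | k. True} \<and> {m + p * k | k. True} \<subseteq> U)"

definition profinite_closed :: "int set \<Rightarrow> bool" where
  "profinite_closed A \<longleftrightarrow> profinite_open (- A)"

definition res_mod :: "int set \<Rightarrow> int \<Rightarrow> int set" where
  "res_mod A n = {r \<in> {0..n-1}. \<exists>x\<in>A. x mod n = r}"

definition res_mod_map_recursive :: "int set \<Rightarrow> bool" where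
  "res_mod_map_recursive A \<longleftrightarrow>
     (\<exists>f. recursive_fun f \<and> (\<forall>n\<ge>1. f n = set_encode (nat ` res_mod A (int n))))"

end

theory Submission
  imports Defs
begin

text \<open>Call e self-zero if the program with code e returns 0 on input e. By diagonalisation this
  is undecidable, whereas checking that w codes a derivation of that evaluation is decidable.
  Let A = {0} \<union> {2^e \<cdot> 1 \<cdot> 3 \<cdot> \<dots> \<cdot> (2(e + w) - 1) | w codes such a derivation for e}.
  An element bounds its e and w, so membership in A is decidable. Its 2-adic valuation is e, so
  2^e \<in> A mod 2^(e+1) exactly when e is self-zero, and n \<mapsto> A mod n is not computable. Finally,
  for every K all elements of A above 2^K \<cdot> 1 \<cdot> 3 \<cdot> \<dots> \<cdot> (2K - 1) are divisible by the odd
  product, which yields a progression through any x \<notin> A that avoids A: A is closed.\<close>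

section \<open>A calculus of computable functions\<close>

inductive_cases eval_ZeroE: "eval Zero xs y"
inductive_cases eval_SuccE: "eval Succ xs y"
inductive_cases eval_ProjE: "eval (Proj i) xs y"
inductive_cases eval_CompE: "eval (Comp f gs) xs y"
inductive_cases eval_Prim0E: "eval (Prim f g) (0 # xs) y"
inductive_cases eval_PrimSE: "eval (Prim f g) (Suc n # xs) y"
inductive_cases eval_MuE: "eval (Mu f) xs y"

lemma eval_deterministic: "eval c xs y \<Longrightarrow> eval c xs z \<Longrightarrow> y = z"
proof (induction arbitrary: z rule: eval.induct)
  case (eval_comp xs gs ys f y)
  from eval_comp.prems obtain ys' where ys': "list_all2 (\<lambda>g y. eval g xs y) gs ys'" "eval f ys' z"
    by (rule eval_CompE)
  have "list_all2 (\<lambda>g y. \<forall>z. eval g xs z \<longrightarrow> y = z) gs ys"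
    using eval_comp.IH(1) by (auto elim: list_all2_mono)
  then have "ys = ys'" using ys'(1)
    by (induction arbitrary: ys' rule: list_all2_induct) (auto simp: list_all2_Cons1)
  then show ?case using eval_comp.IH(2) ys'(2) by blast
next
  case (eval_primS f g n xs y z z')
  from eval_primS.prems obtain y' where "eval (Prim f g) (n # xs) y'" "eval g (n # y' # xs) z'"
    by (rule eval_PrimSE)
  then show ?case using eval_primS.IH by metis
next
  case (eval_mu f n xs)
  from eval_mu.prems have z: "eval f (z # xs) 0" "\<forall>m<z. \<exists>y>0. eval f (m # xs) y"
    by (auto elim: eval_MuE)
  show ?case
  proof (rule linorder_cases[of n z])
    assume "n < z"
    then show ?thesis using z(2) eval_mu.IH(1) by fastforce
  next
    assume "z < n"
    then show ?thesis using z(1) eval_mu.IH(2) by fastforce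
  qed
next
  case (eval_prim0 f xs y g)
  then show ?case by (blast elim: eval_Prim0E)
qed (blast elim: eval_ZeroE eval_SuccE eval_ProjE)+

text \<open>Functions of a fixed arity N, given as functions of the argument list; only argument lists
  of length N matter.\<close>

definition computes :: "nat \<Rightarrow> recf \<Rightarrow> (nat list \<Rightarrow> nat) \<Rightarrow> bool" where
  "computes N c f \<longleftrightarrow> (\<forall>xs. length xs = N \<longrightarrow> eval c xs (f xs))"

definition computable :: "nat \<Rightarrow> (nat list \<Rightarrow> nat) \<Rightarrow> bool" where
  "computable N f \<longleftrightarrow> (\<exists>c. computes N c f)"

definition decidable :: "nat \<Rightarrow> (nat list \<Rightarrow> bool) \<Rightarrow> bool" where
  "decidable N P \<longleftrightarrow> computable N (\<lambda>xs. if P xs then 1 else 0)"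

named_theorems computable_intros

lemma recursive_fun_iff_computable: "recursive_fun f \<longleftrightarrow> computable 1 (\<lambda>xs. f (xs ! 0))"
proof -
  have "(\<forall>n. eval c [n] (f n)) \<longleftrightarrow> (\<forall>xs. length xs = 1 \<longrightarrow> eval c xs (f (xs ! 0)))" for c
    by (auto simp: length_Suc_conv)
  then show ?thesis unfolding recursive_fun_def computable_def computes_def by blast
qed

lemma computable_cong:
  "computable M f \<Longrightarrow> M = N \<Longrightarrow> (\<And>xs. length xs = N \<Longrightarrow> f xs = g xs) \<Longrightarrow> computable N g"
  unfolding computable_def computes_def by metis

lemma computable_zero: "computable N (\<lambda>xs. 0)"
  unfolding computable_def computes_def by (auto intro: eval_zero)

lemma computable_Suc [computable_intros]: "computable N f \<Longrightarrow> computable N (\<lambda>xs. Suc (f xs))"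
  unfolding computable_def computes_def
  by (metis (no_types, lifting) eval_comp eval_succ list.rel_inject(2) list_all2_Nil)

lemma computable_const [computable_intros]: "computable N (\<lambda>xs. n)"
  by (induction n) (auto intro: computable_zero computable_Suc)

lemma computable_nth [computable_intros]: "i < N \<Longrightarrow> computable N (\<lambda>xs. xs ! i)"
  unfolding computable_def computes_def by (auto intro!: exI[of _ "Proj i"] eval_proj)

lemma computable_tl_nth [computable_intros]: "Suc j < N \<Longrightarrow> computable N (\<lambda>xs. tl xs ! j)"
  by (rule computable_cong[OF computable_nth[of "Suc j"]]) (auto simp: nth_tl)

lemma computable_tl_tl_nth [computable_intros]: "Suc (Suc j) < N \<Longrightarrow> computable N (\<lambda>xs. tl (tl xs) ! j)"
  by (rule computable_cong[OF computable_nth[of "Suc (Suc j)"]]) (auto simp: nth_tl)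

lemma computable_compose:
  assumes h: "computable (length gs) h" and gs: "\<forall>g\<in>set gs. computable N g"
  shows "computable N (\<lambda>xs. h (map (\<lambda>g. g xs) gs))"
proof -
  have "\<exists>cs. list_all2 (\<lambda>c g. computes N c g) cs gs"
    using gs by (induction gs) (auto simp: computable_def list_all2_Cons2)
  then obtain cs where cs: "list_all2 (\<lambda>c g. computes N c g) cs gs" by blast
  from h obtain ch where ch: "computes (length gs) ch h" unfolding computable_def by auto
  have "eval (Comp ch cs) xs (h (map (\<lambda>g. g xs) gs))" if "length xs = N" for xs
  proof (rule eval_comp)
    show "list_all2 (\<lambda>g y. eval g xs y) cs (map (\<lambda>g. g xs) gs)"
      using cs that by (induction rule: list_all2_induct) (auto simp: computes_def)
    show "eval ch (map (\<lambda>g. g xs) gs) (h (map (\<lambda>g. g xs) gs))"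
      using ch by (simp add: computes_def)
  qed
  then show ?thesis unfolding computable_def computes_def by blast
qed

lemma computable_compose1:
  "computable 1 (\<lambda>ys. h (ys ! 0)) \<Longrightarrow> computable N f \<Longrightarrow> computable N (\<lambda>xs. h (f xs))"
  using computable_compose[of "[f]" "\<lambda>ys. h (ys ! 0)" N] by simp

lemma computable_compose2:
  "computable 2 (\<lambda>ys. h (ys ! 0) (ys ! 1)) \<Longrightarrow> computable N f \<Longrightarrow> computable N g \<Longrightarrow>
    computable N (\<lambda>xs. h (f xs) (g xs))"
  using computable_compose[of "[f, g]" "\<lambda>ys. h (ys ! 0) (ys ! 1)" N] by (simp add: numeral_2_eq_2)

lemma computable_compose3:
  "computable 3 (\<lambda>ys. h (ys ! 0) (ys ! 1) (ys ! 2)) \<Longrightarrow>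
    computable N f \<Longrightarrow> computable N g \<Longrightarrow> computable N k \<Longrightarrow> computable N (\<lambda>xs. h (f xs) (g xs) (k xs))"
  using computable_compose[of "[f, g, k]" "\<lambda>ys. h (ys ! 0) (ys ! 1) (ys ! 2)" N]
  by (simp add: numeral_3_eq_3 numeral_2_eq_2)

lemma computable_rec_nat:
  assumes f: "computable N f" and g: "computable (Suc (Suc N)) g"
  shows "computable (Suc N) (\<lambda>xs. rec_nat (f (tl xs)) (\<lambda>m y. g (m # y # tl xs)) (xs ! 0))"
proof -
  from f g obtain cf cg where cf: "computes N cf f" and cg: "computes (Suc (Suc N)) cg g"
    unfolding computable_def by auto
  have "eval (Prim cf cg) (n # ys) (rec_nat (f ys) (\<lambda>m y. g (m # y # ys)) n)" if "length ys = N" for n ys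
    using cf cg that by (induction n) (auto simp: computes_def intro: eval_prim0 eval_primS)
  then show ?thesis unfolding computable_def computes_def
    by (intro exI[of _ "Prim cf cg"] allI impI) (auto simp: length_Suc_conv)
qed

lemma computable_tl: "computable N g \<Longrightarrow> computable (Suc N) (\<lambda>ys. g (tl ys))"
proof -
  assume g: "computable N g"
  have "computable (Suc N) (\<lambda>ys. g (map (\<lambda>h. h ys) (map (\<lambda>j ys. ys ! (j + 1)) [0..<N])))"
    by (rule computable_compose) (use g in \<open>auto intro: computable_nth\<close>)
  then show ?thesis
    by (rule computable_cong) (auto intro!: arg_cong[where f=g] nth_equalityI simp: nth_tl)
qed

lemma computable_push:
  assumes "computable (Suc N) H" "computable N b"
  shows "computable N (\<lambda>xs. H (b xs # xs))"
proof -
  have "computable N (\<lambda>xs. H (map (\<lambda>g. g xs) (b # map (\<lambda>j xs. xs ! j) [0..<N])))"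
    by (rule computable_compose) (use assms in \<open>auto intro: computable_nth\<close>)
  then show ?thesis
    by (rule computable_cong) (simp_all add: o_def, metis map_nth)
qed

lemma computable_shift:
  assumes "computable (Suc N) H"
  shows "computable (Suc (Suc N)) (\<lambda>ys. H (ys ! 0 # tl (tl ys)))"
proof -
  have "computable (Suc (Suc N))
      (\<lambda>ys. H (map (\<lambda>g. g ys) ((\<lambda>ys. ys ! 0) # map (\<lambda>j ys. ys ! (j + 2)) [0..<N])))"
    by (rule computable_compose) (use assms in \<open>auto intro: computable_nth\<close>)
  then show ?thesis
    by (rule computable_cong) (auto intro!: arg_cong[where f=H] nth_equalityI simp: nth_tl)
qed

lemma length_2_conv: "length xs = 2 \<longleftrightarrow> (\<exists>a b. xs = [a, b])"
  by (auto simp: numeral_2_eq_2 length_Suc_conv)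

lemma length_3_conv: "length xs = 3 \<longleftrightarrow> (\<exists>a b c. xs = [a, b, c])"
  by (auto simp: numeral_3_eq_3 length_Suc_conv)

lemma computable_add2: "computable 2 (\<lambda>xs. xs ! 0 + xs ! 1)"
proof -
  have rec: "rec_nat b (\<lambda>m y. Suc y) a = a + b" for a b :: nat
    by (induction a) auto
  have "computable (Suc 1) (\<lambda>xs. rec_nat (tl xs ! 0) (\<lambda>m y. Suc ((m # y # tl xs) ! 1)) (xs ! 0))"
    by (rule computable_rec_nat[OF computable_nth computable_Suc[OF computable_nth]]) simp_all
  then show ?thesis
    by (rule computable_cong) (auto simp: length_2_conv rec)
qed

lemma computable_add [computable_intros]:
  "computable N f \<Longrightarrow> computable N g \<Longrightarrow> computable N (\<lambda>xs. f xs + g xs)"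
  by (rule computable_compose2[where h="(+)", OF computable_add2])

lemma computable_mult2: "computable 2 (\<lambda>xs. xs ! 0 * xs ! 1)"
proof -
  have rec: "rec_nat 0 (\<lambda>m y. y + b) a = a * b" for a b :: nat
    by (induction a) auto
  have "computable (Suc 1) (\<lambda>xs. rec_nat 0 (\<lambda>m y. (m # y # tl xs) ! 1 + (m # y # tl xs) ! 2) (xs ! 0))"
    by (rule computable_rec_nat[OF computable_zero]) (intro computable_intros; simp)
  then show ?thesis
    by (rule computable_cong) (auto simp: length_2_conv rec)
qed

lemma computable_mult [computable_intros]:
  "computable N f \<Longrightarrow> computable N g \<Longrightarrow> computable N (\<lambda>xs. f xs * g xs)"
  by (rule computable_compose2[where h="(*)", OF computable_mult2])

lemma computable_pred: "computable 1 (\<lambda>xs. xs ! 0 - 1)"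
proof -
  have "computable (Suc 0) (\<lambda>xs. rec_nat 0 (\<lambda>m y. (m # y # tl xs) ! 0) (xs ! 0))"
    by (rule computable_rec_nat[OF computable_zero computable_nth]) simp
  moreover have "rec_nat 0 (\<lambda>m y. m) a = a - 1" for a :: nat
    by (cases a) auto
  ultimately show ?thesis
    by (auto simp: length_Suc_conv elim!: computable_cong)
qed

lemma computable_minus2: "computable 2 (\<lambda>xs. xs ! 0 - xs ! 1)"
proof -
  have rec: "rec_nat b (\<lambda>m y. y - Suc 0) a = b - a" for a b :: nat
    by (induction a) auto
  have "computable (Suc 1) (\<lambda>xs. rec_nat (tl xs ! 0) (\<lambda>m y. (m # y # tl xs) ! 1 - 1) (xs ! 0))"
    by (rule computable_rec_nat[OF computable_nth computable_compose1[OF computable_pred]])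
      (auto intro: computable_nth)
  then have "computable 2 (\<lambda>xs. xs ! 1 - xs ! 0)"
    by (rule computable_cong) (auto simp: length_2_conv rec)
  from computable_compose2[where h="\<lambda>a b. b - a", OF this, of 2 "\<lambda>xs. xs ! 1" "\<lambda>xs. xs ! 0"]
  show ?thesis by (simp add: computable_nth)
qed

lemma computable_minus [computable_intros]:
  "computable N f \<Longrightarrow> computable N g \<Longrightarrow> computable N (\<lambda>xs. f xs - g xs)"
  by (rule computable_compose2[where h="(-)", OF computable_minus2])

lemma computable_if_zero3: "computable 3 (\<lambda>xs. if xs ! 0 = 0 then xs ! 1 else xs ! 2)"
proof -
  have "computable (Suc 2) (\<lambda>xs. rec_nat (tl xs ! 0) (\<lambda>m y. (m # y # tl xs) ! 3) (xs ! 0))"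
    by (rule computable_rec_nat[OF computable_nth computable_nth]) simp_all
  moreover have "rec_nat b (\<lambda>m y. c) a = (if a = 0 then b else c)" for a b c :: nat
    by (cases a) auto
  ultimately show ?thesis
    by (auto simp: length_3_conv elim!: computable_cong)
qed

lemma computable_if [computable_intros]:
  "decidable N P \<Longrightarrow> computable N f \<Longrightarrow> computable N g \<Longrightarrow> computable N (\<lambda>xs. if P xs then f xs else g xs)"
  unfolding decidable_def
  by (rule computable_cong[OF computable_compose3[where h="\<lambda>a b c. if a = 0 then b else c",
        OF computable_if_zero3, of N "\<lambda>xs. if P xs then 1 else 0" g f]]) auto

lemma decidable_eq [computable_intros]:
  "computable N f \<Longrightarrow> computable N g \<Longrightarrow> decidable N (\<lambda>xs. f xs = g xs)"
  unfolding decidable_def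
  by (rule computable_cong[where f="\<lambda>xs. 1 - ((f xs - g xs) + (g xs - f xs))"])
    (auto intro!: computable_intros)

lemma decidable_le [computable_intros]:
  "computable N f \<Longrightarrow> computable N g \<Longrightarrow> decidable N (\<lambda>xs. f xs \<le> g xs)"
  unfolding decidable_def
  by (rule computable_cong[where f="\<lambda>xs. 1 - (f xs - g xs)"]) (auto intro!: computable_intros)

lemma decidable_less [computable_intros]:
  "computable N f \<Longrightarrow> computable N g \<Longrightarrow> decidable N (\<lambda>xs. f xs < g xs)"
  unfolding decidable_def
  by (rule computable_cong[where f="\<lambda>xs. 1 - (Suc (f xs) - g xs)"]) (auto intro!: computable_intros)

lemma decidable_not [computable_intros]: "decidable N P \<Longrightarrow> decidable N (\<lambda>xs. \<not> P xs)"
  unfolding decidable_def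
  by (rule computable_cong[where f="\<lambda>xs. 1 - (if P xs then 1 else 0)"]) (auto intro!: computable_intros)

lemma decidable_conj [computable_intros]:
  "decidable N P \<Longrightarrow> decidable N Q \<Longrightarrow> decidable N (\<lambda>xs. P xs \<and> Q xs)"
  unfolding decidable_def
  by (rule computable_cong[where f="\<lambda>xs. (if P xs then 1 else 0) * (if Q xs then 1 else 0)"])
    (auto intro!: computable_intros)

lemma decidable_disj [computable_intros]:
  "decidable N P \<Longrightarrow> decidable N Q \<Longrightarrow> decidable N (\<lambda>xs. P xs \<or> Q xs)"
  unfolding decidable_def
  by (rule computable_cong[where f="\<lambda>xs. (if P xs then 1 else if Q xs then 1 else 0)"])
    (auto intro!: computable_intros simp flip: decidable_def)

lemma decidable_imp [computable_intros]:
  "decidable N P \<Longrightarrow> decidable N Q \<Longrightarrow> decidable N (\<lambda>xs. P xs \<longrightarrow> Q xs)"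
  unfolding imp_conv_disj by (intro computable_intros)

lemma decidable_compose:
  assumes "decidable (length gs) P" "\<forall>g\<in>set gs. computable N g"
  shows "decidable N (\<lambda>xs. P (map (\<lambda>g. g xs) gs))"
  using computable_compose[of gs "\<lambda>ys. if P ys then 1 else 0" N] assms unfolding decidable_def by simp

lemma decidable_compose1:
  "decidable 1 (\<lambda>ys. P (ys ! 0)) \<Longrightarrow> computable N a \<Longrightarrow> decidable N (\<lambda>xs. P (a xs))"
  using decidable_compose[of "[a]" "\<lambda>ys. P (ys ! 0)" N] by simp

lemma decidable_compose2:
  "decidable 2 (\<lambda>ys. P (ys ! 0) (ys ! 1)) \<Longrightarrow> computable N a \<Longrightarrow> computable N b \<Longrightarrow>
    decidable N (\<lambda>xs. P (a xs) (b xs))"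
  using decidable_compose[of "[a, b]" "\<lambda>ys. P (ys ! 0) (ys ! 1)" N] by (simp add: numeral_2_eq_2)

lemma decidable_compose5:
  "decidable 5 (\<lambda>ys. P (ys ! 0) (ys ! 1) (ys ! 2) (ys ! 3) (ys ! 4)) \<Longrightarrow>
    computable N a \<Longrightarrow> computable N b \<Longrightarrow> computable N c \<Longrightarrow> computable N d \<Longrightarrow> computable N e \<Longrightarrow>
    decidable N (\<lambda>xs. P (a xs) (b xs) (c xs) (d xs) (e xs))"
  using decidable_compose[of "[a, b, c, d, e]" "\<lambda>ys. P (ys ! 0) (ys ! 1) (ys ! 2) (ys ! 3) (ys ! 4)" N]
  by (simp add: eval_nat_numeral)

lemma rec_nat_sum: "rec_nat 0 (\<lambda>m y. y + G m) n = (\<Sum>i<n. G i)"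
  by (induction n) auto

lemma computable_sum [computable_intros]:
  assumes F: "computable (Suc N) (\<lambda>ys. F (ys ! 0) (tl ys))" and b: "computable N b"
  shows "computable N (\<lambda>xs. \<Sum>i<b xs. F i xs)"
proof -
  have "computable (Suc (Suc N)) (\<lambda>ys. ys ! 1 + F (ys ! 0) (tl (tl ys)))"
    using computable_add[OF computable_nth computable_shift[OF F]] by simp
  from computable_rec_nat[OF computable_zero this]
  have "computable (Suc N) (\<lambda>xs. rec_nat 0 (\<lambda>m y. y + F m (tl xs)) (xs ! 0))" by simp
  then have "computable (Suc N) (\<lambda>xs. \<Sum>i<xs ! 0. F i (tl xs))"
    by (simp only: rec_nat_sum)
  from computable_push[OF this b] show ?thesis by simp
qed

lemma decidable_ball [computable_intros]:
  assumes P: "decidable (Suc N) (\<lambda>ys. P (ys ! 0) (tl ys))" and b: "computable N b"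
  shows "decidable N (\<lambda>xs. \<forall>i<b xs. P i xs)"
proof -
  have "computable N (\<lambda>xs. \<Sum>i<b xs. if \<not> P i xs then 1 else 0)"
    by (rule computable_sum[OF _ b]) (use decidable_not[OF P] in \<open>simp add: decidable_def\<close>)
  then have "decidable N (\<lambda>xs. (\<Sum>i<b xs. if \<not> P i xs then 1 else 0) = (0::nat))"
    by (rule decidable_eq[OF _ computable_const])
  then show ?thesis unfolding decidable_def by (rule computable_cong) simp_all
qed

lemma decidable_bex [computable_intros]:
  assumes "decidable (Suc N) (\<lambda>ys. P (ys ! 0) (tl ys))" and "computable N b"
  shows "decidable N (\<lambda>xs. \<exists>i<b xs. P i xs)"
  using decidable_not[OF decidable_ball[OF decidable_not[OF assms(1)] assms(2)]] by simp

lemma computable_power2: "computable 2 (\<lambda>xs. xs ! 0 ^ xs ! 1)"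
proof -
  have rec: "rec_nat (Suc 0) (\<lambda>m y. y * b) a = b ^ a" for a b :: nat
    by (induction a) (simp_all add: power_commutes)
  have "computable (Suc 1) (\<lambda>xs. rec_nat 1 (\<lambda>m y. (m # y # tl xs) ! 1 * (m # y # tl xs) ! 2) (xs ! 0))"
    by (rule computable_rec_nat[OF computable_const]) (intro computable_intros; simp)
  then have "computable 2 (\<lambda>xs. xs ! 1 ^ xs ! 0)"
    by (rule computable_cong) (auto simp: length_2_conv rec)
  from computable_compose2[where h="\<lambda>a b. b ^ a", OF this, of 2 "\<lambda>xs. xs ! 1" "\<lambda>xs. xs ! 0"]
  show ?thesis by (simp add: computable_nth)
qed

lemma computable_power [computable_intros]:
  "computable N f \<Longrightarrow> computable N g \<Longrightarrow> computable N (\<lambda>xs. f xs ^ g xs)"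
  by (rule computable_compose2[where h="(^)", OF computable_power2])

lemma div_eq_card: "(x::nat) div y = (if y = 0 then 0 else \<Sum>i<x. if (i + 1) * y \<le> x then 1 else 0)"
proof (cases "y = 0")
  case False
  have "(i < x \<and> (i + 1) * y \<le> x) \<longleftrightarrow> i < x div y" for i
    using False less_eq_div_iff_mult_less_eq[of y "Suc i" x] div_le_dividend[of x y]
    by (auto simp: less_eq_Suc_le intro: le_trans)
  then have "{i. i < x \<and> (i + 1) * y \<le> x} = {..<x div y}" by auto
  then show ?thesis using False by (simp add: sum.If_cases Int_def)
qed simp

lemma computable_div [computable_intros]:
  "computable N f \<Longrightarrow> computable N g \<Longrightarrow> computable N (\<lambda>xs. f xs div g xs)"
  unfolding div_eq_card by (intro computable_intros computable_tl; simp)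

lemma computable_mod [computable_intros]:
  "computable N f \<Longrightarrow> computable N g \<Longrightarrow> computable N (\<lambda>xs. f xs mod g xs)"
  unfolding minus_div_mult_eq_mod[symmetric] by (intro computable_intros)


section \<open>Arithmetic codes of pairs and lists\<close>

definition pair :: "nat \<Rightarrow> nat \<Rightarrow> nat" where "pair a b = prod_encode (a, b)"
definition pfst :: "nat \<Rightarrow> nat" where "pfst z = fst (prod_decode z)"
definition psnd :: "nat \<Rightarrow> nat" where "psnd z = snd (prod_decode z)"

lemma pfst_pair [simp]: "pfst (pair a b) = a" and psnd_pair [simp]: "psnd (pair a b) = b"
  by (simp_all add: pfst_def psnd_def pair_def)

lemma pair_pfst_psnd [simp]: "pair (pfst z) (psnd z) = z"
  by (simp add: pfst_def psnd_def pair_def)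

lemma pfst_le: "pfst z \<le> z" and psnd_le: "psnd z \<le> z"
  by (metis le_prod_encode_1 pair_def pair_pfst_psnd) (metis le_prod_encode_2 pair_def pair_pfst_psnd)

lemma pair_eq: "pair a b = (a + b) * (a + b + 1) div 2 + a"
  by (simp add: pair_def prod_encode_def triangle_def)

lemma pfst_0 [simp]: "pfst 0 = 0" and psnd_0 [simp]: "psnd 0 = 0"
  using pfst_pair[of 0 0] psnd_pair[of 0 0] by (simp_all add: pair_eq)

lemma computable_pair [computable_intros]:
  "computable N f \<Longrightarrow> computable N g \<Longrightarrow> computable N (\<lambda>xs. pair (f xs) (g xs))"
  unfolding pair_eq by (intro computable_intros)

text \<open>The components of z are found by a search bounded by z.\<close>

lemma pfst_eq_sum: "pfst z = (\<Sum>a<Suc z. if \<exists>b<Suc z. pair a b = z then a else 0)"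
proof -
  have "(\<exists>b<Suc z. pair a b = z) \<longleftrightarrow> a = pfst z" for a
    using psnd_le[of z] by (metis le_imp_less_Suc pair_pfst_psnd pfst_pair)
  then show ?thesis using pfst_le[of z] by (simp add: sum.delta')
qed

lemma psnd_eq_sum: "psnd z = (\<Sum>b<Suc z. if \<exists>a<Suc z. pair a b = z then b else 0)"
proof -
  have "(\<exists>a<Suc z. pair a b = z) \<longleftrightarrow> b = psnd z" for b
    using pfst_le[of z] by (metis le_imp_less_Suc pair_pfst_psnd psnd_pair)
  then show ?thesis using psnd_le[of z] by (simp add: sum.delta')
qed

lemma computable_pfst [computable_intros]:
  assumes "computable N f" shows "computable N (\<lambda>xs. pfst (f xs))"
proof -
  have "computable 1 (\<lambda>xs. pfst (xs ! 0))"
    unfolding pfst_eq_sum by (intro computable_intros; simp)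
  from computable_compose1[OF this assms] show ?thesis .
qed

lemma computable_psnd [computable_intros]:
  assumes "computable N f" shows "computable N (\<lambda>xs. psnd (f xs))"
proof -
  have "computable 1 (\<lambda>xs. psnd (xs ! 0))"
    unfolding psnd_eq_sum by (intro computable_intros; simp)
  from computable_compose1[OF this assms] show ?thesis .
qed

definition lhd :: "nat \<Rightarrow> nat" where "lhd w = pfst (w - 1)"
definition ltl :: "nat \<Rightarrow> nat" where "ltl w = psnd (w - 1)"
definition lcons :: "nat \<Rightarrow> nat \<Rightarrow> nat" where "lcons x w = Suc (pair x w)"
definition lnth :: "nat \<Rightarrow> nat \<Rightarrow> nat" where "lnth w i = lhd ((ltl ^^ i) w)"
definition llen :: "nat \<Rightarrow> nat" where "llen w = (\<Sum>i<w. if (ltl ^^ i) w \<noteq> 0 then 1 else 0)"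

lemma list_encode_Cons: "list_encode (x # xs) = lcons x (list_encode xs)"
  by (simp add: lcons_def pair_def)

lemma list_decode_lcons [simp]: "list_decode (lcons x w) = x # list_decode w"
  by (metis list_encode_Cons list_decode_inverse list_encode_inverse)

lemma list_decode_eq_Nil_iff [simp]: "list_decode w = [] \<longleftrightarrow> w = 0"
  by (metis list_decode.simps(1) list_decode_inverse list_encode.simps(1))

lemma list_encode_pos_iff [simp]: "0 < list_encode xs \<longleftrightarrow> xs \<noteq> []"
  by (cases xs) auto

lemma lcons_lhd_ltl: "w \<noteq> 0 \<Longrightarrow> lcons (lhd w) (ltl w) = w"
  unfolding lcons_def lhd_def ltl_def by simp

lemma lhd_lcons [simp]: "lhd (lcons x w) = x" and ltl_lcons [simp]: "ltl (lcons x w) = w"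
  by (simp_all add: lhd_def ltl_def lcons_def)

lemma list_decode_nonzero: "w \<noteq> 0 \<Longrightarrow> list_decode w = lhd w # list_decode (ltl w)"
  by (metis lcons_lhd_ltl list_decode_lcons)

lemma list_decode_ltl: "list_decode (ltl w) = tl (list_decode w)"
proof (cases "w = 0")
  case True
  then show ?thesis by (simp add: ltl_def)
next
  case False
  then show ?thesis by (simp add: list_decode_nonzero)
qed

lemma lhd_eq_hd: "w \<noteq> 0 \<Longrightarrow> lhd w = hd (list_decode w)"
  by (simp add: list_decode_nonzero)

lemma list_decode_ltl_funpow: "list_decode ((ltl ^^ i) w) = drop i (list_decode w)"
  by (induction i) (simp_all add: list_decode_ltl drop_Suc tl_drop)

lemma ltl_funpow_eq_0_iff: "(ltl ^^ i) w = 0 \<longleftrightarrow> length (list_decode w) \<le> i"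
  by (metis drop_eq_Nil list_decode_eq_Nil_iff list_decode_ltl_funpow)

lemma lnth_eq_nth: "i < length (list_decode w) \<Longrightarrow> lnth w i = list_decode w ! i"
  by (simp add: lnth_def lhd_eq_hd ltl_funpow_eq_0_iff list_decode_ltl_funpow hd_drop_conv_nth)

lemma length_le_list_encode: "length xs \<le> list_encode xs"
  by (induction xs) (auto simp: le_prod_encode_2 intro: le_trans[OF _ le_prod_encode_2])

lemma llen_eq_length: "llen w = length (list_decode w)"
proof -
  have "{i. i < w \<and> length (list_decode w) > i} = {..<length (list_decode w)}"
    using length_le_list_encode[of "list_decode w"] by auto
  then show ?thesis by (simp add: llen_def ltl_funpow_eq_0_iff sum.If_cases Int_def not_le)
qed

lemma computable_lhd [computable_intros]: "computable N f \<Longrightarrow> computable N (\<lambda>xs. lhd (f xs))"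
  unfolding lhd_def by (intro computable_intros)

lemma computable_ltl [computable_intros]: "computable N f \<Longrightarrow> computable N (\<lambda>xs. ltl (f xs))"
  unfolding ltl_def by (intro computable_intros)

lemma computable_ltl_funpow:
  assumes "computable N n" "computable N w"
  shows "computable N (\<lambda>xs. (ltl ^^ n xs) (w xs))"
proof -
  have "computable (Suc 1) (\<lambda>xs. rec_nat (tl xs ! 0) (\<lambda>m y. ltl ((m # y # tl xs) ! 1)) (xs ! 0))"
    by (rule computable_rec_nat) (intro computable_intros; simp)+
  moreover have "rec_nat b (\<lambda>m y. ltl y) a = (ltl ^^ a) b" for a b
    by (induction a) auto
  ultimately have "computable 2 (\<lambda>xs. (ltl ^^ (xs ! 0)) (xs ! 1))"
    by (auto simp: length_2_conv elim!: computable_cong)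
  then show ?thesis using assms by (rule computable_compose2)
qed

lemma computable_lnth [computable_intros]:
  "computable N f \<Longrightarrow> computable N g \<Longrightarrow> computable N (\<lambda>xs. lnth (f xs) (g xs))"
  unfolding lnth_def by (intro computable_intros computable_ltl_funpow)

lemma computable_llen [computable_intros]:
  assumes "computable N f" shows "computable N (\<lambda>xs. llen (f xs))"
proof -
  have "computable 1 (\<lambda>xs. llen (xs ! 0))"
    unfolding llen_def by (intro computable_intros computable_ltl_funpow computable_tl; simp)
  from computable_compose1[OF this assms] show ?thesis .
qed

lemma computable_lcons [computable_intros]:
  "computable N f \<Longrightarrow> computable N g \<Longrightarrow> computable N (\<lambda>xs. lcons (f xs) (g xs))"
  unfolding lcons_def by (intro computable_intros)

section \<open>Derivations of evaluations\<close>

fun recf_code :: "recf \<Rightarrow> nat" where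
  "recf_code Zero = pair 0 0"
| "recf_code Succ = pair 1 0"
| "recf_code (Proj i) = pair 2 i"
| "recf_code (Comp f gs) = pair 3 (pair (recf_code f) (list_encode (map recf_code gs)))"
| "recf_code (Prim f g) = pair 4 (pair (recf_code f) (recf_code g))"
| "recf_code (Mu f) = pair 5 (recf_code f)"

text \<open>A judgement (fc, xc, y) stands for eval f xs y with fc = recf_code f and
  xc = list_encode xs. It follows from a set S of judgements if it is the conclusion of a rule
  of eval whose premises lie in S; the rule is selected by the tag pfst fc.\<close>

type_synonym judgement = "nat \<times> nat \<times> nat"

definition follows_from :: "judgement set \<Rightarrow> judgement \<Rightarrow> bool" where
  "follows_from S j = (case j of (fc, xc, y) \<Rightarrow>
     (if pfst fc = 0 then y = 0
      else if pfst fc = 1 then list_decode xc \<noteq> [] \<and> y = Suc (hd (list_decode xc))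
      else if pfst fc = 2 then psnd fc < length (list_decode xc) \<and> y = list_decode xc ! psnd fc
      else if pfst fc = 3 then
        (\<exists>(f', yc, y')\<in>S. f' = pfst (psnd fc) \<and> y' = y \<and>
            length (list_decode yc) = length (list_decode (psnd (psnd fc))) \<and>
            (\<forall>i<length (list_decode (psnd (psnd fc))).
               (list_decode (psnd (psnd fc)) ! i, xc, list_decode yc ! i) \<in> S))
      else if pfst fc = 4 then list_decode xc \<noteq> [] \<and>
        (if hd (list_decode xc) = 0 then (pfst (psnd fc), list_encode (tl (list_decode xc)), y) \<in> S
         else (\<exists>(f', xc', y')\<in>S. f' = fc \<and>
             xc' = list_encode ((hd (list_decode xc) - 1) # tl (list_decode xc)) \<and>
             (psnd (psnd fc), list_encode ((hd (list_decode xc) - 1) # y' # tl (list_decode xc)), y) \<in> S))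
      else (psnd fc, list_encode (y # list_decode xc), 0) \<in> S \<and>
        (\<forall>m<y. \<exists>(f', xc', y')\<in>S. f' = psnd fc \<and> xc' = list_encode (m # list_decode xc) \<and> y' > 0)))"

lemma follows_from_mono: "follows_from S j \<Longrightarrow> S \<subseteq> S' \<Longrightarrow> follows_from S' j"
  unfolding follows_from_def by (cases j) (clarsimp split: if_splits; blast)

lemma follows_from_recf_code:
  "follows_from S (recf_code f, list_encode xs, y) \<longleftrightarrow>
    (case f of Zero \<Rightarrow> y = 0
     | Succ \<Rightarrow> xs \<noteq> [] \<and> y = Suc (hd xs)
     | Proj i \<Rightarrow> i < length xs \<and> y = xs ! i
     | Comp g gs \<Rightarrow> (\<exists>(f', yc, y')\<in>S. f' = recf_code g \<and> y' = y \<and>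
            length (list_decode yc) = length gs \<and>
            (\<forall>i<length gs. (recf_code (gs ! i), list_encode xs, list_decode yc ! i) \<in> S))
     | Prim g h \<Rightarrow> xs \<noteq> [] \<and>
        (if hd xs = 0 then (recf_code g, list_encode (tl xs), y) \<in> S
         else (\<exists>(f', xc', y')\<in>S. f' = recf_code f \<and> xc' = list_encode ((hd xs - 1) # tl xs) \<and>
             (recf_code h, list_encode ((hd xs - 1) # y' # tl xs), y) \<in> S))
     | Mu g \<Rightarrow> (recf_code g, list_encode (y # xs), 0) \<in> S \<and>
        (\<forall>m<y. \<exists>(f', xc', y')\<in>S. f' = recf_code g \<and> xc' = list_encode (m # xs) \<and> y' > 0))"
  by (cases f) (simp_all add: follows_from_def)

definition derivation :: "judgement list \<Rightarrow> bool" where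
  "derivation L \<longleftrightarrow> (\<forall>k<length L. follows_from (set (take k L)) (L ! k))"

lemma derivation_Nil: "derivation []"
  by (simp add: derivation_def)

lemma derivation_snoc_iff: "derivation (L @ [j]) \<longleftrightarrow> derivation L \<and> follows_from (set L) j"
  unfolding derivation_def by (auto simp: nth_append less_Suc_eq)

lemma derivation_append: "derivation L1 \<Longrightarrow> derivation L2 \<Longrightarrow> derivation (L1 @ L2)"
proof (induction L2 rule: rev_induct)
  case (snoc j L2)
  then show ?case
    by (metis append_assoc derivation_snoc_iff follows_from_mono set_append sup_ge2)
qed simp

lemma follows_from_sound:
  assumes j: "follows_from S (recf_code f, list_encode xs, y)"
    and S: "\<And>g zc v. (recf_code g, zc, v) \<in> S \<Longrightarrow> eval g (list_decode zc) v"
  shows "eval f xs y"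
proof -
  have S': "eval g zs v" if "(recf_code g, list_encode zs, v) \<in> S" for g zs v
    using S[OF that] by simp
  note j = j[unfolded follows_from_recf_code]
  show ?thesis
  proof (cases f)
    case Zero
    then show ?thesis using j by (simp add: eval_zero)
  next
    case Succ
    then obtain x xs' where "xs = x # xs'" "y = Suc x" using j by (cases xs) auto
    then show ?thesis using Succ by (simp add: eval_succ)
  next
    case (Proj i)
    then show ?thesis using j by (auto intro: eval_proj)
  next
    case (Comp g gs)
    then obtain yc where yc: "(recf_code g, yc, y) \<in> S" "length (list_decode yc) = length gs"
      "\<forall>i<length gs. (recf_code (gs ! i), list_encode xs, list_decode yc ! i) \<in> S"
      using j by auto
    have "list_all2 (\<lambda>g y. eval g xs y) gs (list_decode yc)"
      using yc(2,3) S' by (auto intro!: list_all2_all_nthI)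
    then show ?thesis using Comp S[OF yc(1)] by (blast intro: eval_comp)
  next
    case (Prim g h)
    then obtain n xs' where xs: "xs = n # xs'" using j by (cases xs) auto
    show ?thesis
    proof (cases n)
      case 0
      then have "(recf_code g, list_encode xs', y) \<in> S" using j Prim xs by simp
      then show ?thesis using Prim xs 0 S' by (blast intro: eval_prim0)
    next
      case (Suc n')
      then obtain y' where "(recf_code f, list_encode (n' # xs'), y') \<in> S"
          "(recf_code h, list_encode (n' # y' # xs'), y) \<in> S"
        using j Prim xs by auto
      then show ?thesis using Prim xs Suc S' by (blast intro: eval_primS)
    qed
  next
    case (Mu g)
    then have "(recf_code g, list_encode (y # xs), 0) \<in> S"
        and less: "\<forall>m<y. \<exists>(f', xc', y')\<in>S. f' = recf_code g \<and> xc' = list_encode (m # xs) \<and> y' > 0"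
      using j by simp_all
    moreover have "\<exists>v>0. eval g (m # xs) v" if "m < y" for m
      using less that S' by blast
    ultimately show ?thesis using Mu S' by (blast intro: eval_mu)
  qed
qed

lemma derivation_sound:
  "derivation L \<Longrightarrow> (recf_code f, zc, y) \<in> set L \<Longrightarrow> eval f (list_decode zc) y"
proof (induction L arbitrary: f zc y rule: rev_induct)
  case (snoc j L)
  then have "derivation L" "follows_from (set L) j" by (simp_all add: derivation_snoc_iff)
  then show ?case
    using snoc.IH snoc.prems(2) follows_from_sound[of "set L" f "list_decode zc" y] by auto
qed simp

definition derivable :: "judgement \<Rightarrow> bool" where
  "derivable j \<longleftrightarrow> (\<exists>L. derivation L \<and> j \<in> set L)"

lemma derivable_by_rule:
  assumes "finite J" "\<forall>j'\<in>J. derivable j'" "follows_from J j"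
  shows "derivable j"
proof -
  have "\<exists>L. derivation L \<and> J \<subseteq> set L"
    using assms(1,2)
  proof (induction J rule: finite_induct)
    case (insert j' J)
    then obtain L1 L2 where "derivation L1" "J \<subseteq> set L1" "derivation L2" "j' \<in> set L2"
      unfolding derivable_def by auto
    then show ?case by (intro exI[of _ "L1 @ L2"]) (auto intro: derivation_append)
  qed (auto intro: derivation_Nil)
  then obtain L where "derivation L" "J \<subseteq> set L" by blast
  then show ?thesis unfolding derivable_def using assms(3)
    by (intro exI[of _ "L @ [j]"]) (auto simp: derivation_snoc_iff intro: follows_from_mono)
qed

lemma derivation_complete: "eval f xs y \<Longrightarrow> derivable (recf_code f, list_encode xs, y)"
proof (induction rule: eval.induct)
  case (eval_comp xs gs ys f z)
  let ?J = "insert (recf_code f, list_encode ys, z)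
    ((\<lambda>i. (recf_code (gs ! i), list_encode xs, ys ! i)) ` {..<length gs})"
  have "length ys = length gs" using eval_comp.IH(1) by (simp add: list_all2_lengthD)
  then have "follows_from ?J (recf_code (Comp f gs), list_encode xs, z)"
    unfolding follows_from_recf_code recf.case by (intro bexI[of _ "(recf_code f, list_encode ys, z)"]) auto
  moreover have "\<forall>j\<in>?J. derivable j"
    using eval_comp.IH by (auto simp: list_all2_conv_all_nth)
  ultimately show ?case by (intro derivable_by_rule[of ?J]) auto
next
  case (eval_prim0 f xs y g)
  have "follows_from {(recf_code f, list_encode xs, y)} (recf_code (Prim f g), list_encode (0 # xs), y)"
    unfolding follows_from_recf_code recf.case by simp
  then show ?case using eval_prim0.IH by (intro derivable_by_rule) auto
next
  case (eval_primS f g n xs y z)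
  let ?J = "{(recf_code (Prim f g), list_encode (n # xs), y), (recf_code g, list_encode (n # y # xs), z)}"
  have "follows_from ?J (recf_code (Prim f g), list_encode (Suc n # xs), z)"
    unfolding follows_from_recf_code recf.case
    by (auto simp del: list_encode.simps recf_code.simps
        intro!: bexI[of _ "(recf_code (Prim f g), list_encode (n # xs), y)"])
  then show ?case using eval_primS.IH by (intro derivable_by_rule[of ?J]) auto
next
  case (eval_mu f n xs)
  obtain v where v: "\<And>m. m < n \<Longrightarrow> v m > 0 \<and> derivable (recf_code f, list_encode (m # xs), v m)"
    using eval_mu.IH(2) by metis
  let ?J = "insert (recf_code f, list_encode (n # xs), 0)
    ((\<lambda>m. (recf_code f, list_encode (m # xs), v m)) ` {..<n})"
  have "follows_from ?J (recf_code (Mu f), list_encode xs, n)"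
    unfolding follows_from_recf_code recf.case using v by force
  then show ?case using eval_mu.IH(1) v by (intro derivable_by_rule[of ?J]) auto
qed (intro derivable_by_rule[of "{}"]; simp add: follows_from_def)+

definition self_zero :: "nat \<Rightarrow> bool" where
  "self_zero e \<longleftrightarrow> derivable (e, list_encode [e], 0)"

lemma self_zero_recf_code: "self_zero (recf_code f) \<longleftrightarrow> eval f [recf_code f] 0"
  using derivation_sound[of _ f "list_encode [recf_code f]" 0] derivation_complete
  unfolding self_zero_def derivable_def by (metis list_encode_inverse)

section \<open>Certificates of self-evaluation are decidable\<close>

text \<open>A derivation is coded by the list code of the codes pair fc (pair xc y) of its judgements.\<close>

definition triple_decode :: "nat \<Rightarrow> judgement" where
  "triple_decode t = (pfst t, pfst (psnd t), psnd (psnd t))"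

definition triple_encode :: "judgement \<Rightarrow> nat" where
  "triple_encode j = (case j of (a, b, c) \<Rightarrow> pair a (pair b c))"

lemma triple_decode_encode [simp]: "triple_decode (triple_encode j) = j"
  by (cases j) (simp add: triple_decode_def triple_encode_def)

lemma triple_decode_eq_iff: "triple_decode t = (a, b, c) \<longleftrightarrow> t = pair a (pair b c)"
  by (auto simp: triple_decode_def)

definition judgements :: "nat \<Rightarrow> judgement list" where
  "judgements w = map triple_decode (list_decode w)"

definition jfun :: "nat \<Rightarrow> nat \<Rightarrow> nat" where "jfun w k = pfst (lnth w k)"
definition jarg :: "nat \<Rightarrow> nat \<Rightarrow> nat" where "jarg w k = pfst (psnd (lnth w k))"
definition jval :: "nat \<Rightarrow> nat \<Rightarrow> nat" where "jval w k = psnd (psnd (lnth w k))"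

definition occurs_before :: "nat \<Rightarrow> nat \<Rightarrow> nat \<Rightarrow> nat \<Rightarrow> nat \<Rightarrow> bool" where
  "occurs_before w k a b c \<longleftrightarrow> (\<exists>k'<k. lnth w k' = pair a (pair b c))"

lemma length_judgements: "length (judgements w) = llen w"
  by (simp add: judgements_def llen_eq_length)

lemma judgements_nth: "k < llen w \<Longrightarrow> judgements w ! k = (jfun w k, jarg w k, jval w k)"
  by (simp add: judgements_def llen_eq_length lnth_eq_nth jfun_def jarg_def jval_def triple_decode_def)

lemma judgements_list_encode: "judgements (list_encode (map triple_encode L)) = L"
  by (simp add: judgements_def map_idI)

lemma bex_set_take_iff: "k \<le> length L \<Longrightarrow> (\<exists>x\<in>set (take k L). P x) \<longleftrightarrow> (\<exists>k'<k. P (L ! k'))"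
  by (fastforce simp: in_set_conv_nth)

lemma mem_set_take_iff: "k \<le> length L \<Longrightarrow> x \<in> set (take k L) \<longleftrightarrow> (\<exists>k'<k. L ! k' = x)"
  using bex_set_take_iff[of k L "\<lambda>y. y = x"] by auto

lemma mem_take_judgements_iff:
  "k \<le> llen w \<Longrightarrow> (a, b, c) \<in> set (take k (judgements w)) \<longleftrightarrow> occurs_before w k a b c"
  by (auto simp: mem_set_take_iff length_judgements occurs_before_def judgements_def
      llen_eq_length lnth_eq_nth triple_decode_eq_iff)

lemma bex_take_judgements_iff:
  assumes "k \<le> llen w"
  shows "(\<exists>x\<in>set (take k (judgements w)). P x) \<longleftrightarrow> (\<exists>k'<k. P (jfun w k', jarg w k', jval w k'))"
proof -
  have "(\<exists>x\<in>set (take k (judgements w)). P x) \<longleftrightarrow> (\<exists>k'<k. P (judgements w ! k'))"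
    using bex_set_take_iff[of k "judgements w" P] assms by (simp add: length_judgements)
  also have "\<dots> \<longleftrightarrow> (\<exists>k'<k. P (jfun w k', jarg w k', jval w k'))"
    using assms by (auto simp: judgements_nth)
  finally show ?thesis .
qed

definition follows_from_code :: "nat \<Rightarrow> nat \<Rightarrow> nat \<Rightarrow> nat \<Rightarrow> nat \<Rightarrow> bool" where
 "follows_from_code w k fc xc y \<longleftrightarrow>
   (pfst fc = 0 \<longrightarrow> y = 0) \<and>
   (pfst fc = 1 \<longrightarrow> xc \<noteq> 0 \<and> y = Suc (lhd xc)) \<and>
   (pfst fc = 2 \<longrightarrow> psnd fc < llen xc \<and> y = lnth xc (psnd fc)) \<and>
   (pfst fc = 3 \<longrightarrow> (\<exists>k'<k. jfun w k' = pfst (psnd fc) \<and> jval w k' = y \<and>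
       llen (jarg w k') = llen (psnd (psnd fc)) \<and>
       (\<forall>i<llen (psnd (psnd fc)). occurs_before w k (lnth (psnd (psnd fc)) i) xc (lnth (jarg w k') i)))) \<and>
   (pfst fc = 4 \<longrightarrow> xc \<noteq> 0 \<and> (lhd xc = 0 \<longrightarrow> occurs_before w k (pfst (psnd fc)) (ltl xc) y) \<and>
       (lhd xc \<noteq> 0 \<longrightarrow> (\<exists>k'<k. jfun w k' = fc \<and> jarg w k' = lcons (lhd xc - 1) (ltl xc) \<and>
           occurs_before w k (psnd (psnd fc)) (lcons (lhd xc - 1) (lcons (jval w k') (ltl xc))) y))) \<and>
   (5 \<le> pfst fc \<longrightarrow> occurs_before w k (psnd fc) (lcons y xc) 0 \<and>
       (\<forall>m<y. \<exists>k'<k. jfun w k' = psnd fc \<and> jarg w k' = lcons m xc \<and> 0 < jval w k'))"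

lemma follows_from_code_iff:
  assumes k: "k \<le> llen w"
  shows "follows_from (set (take k (judgements w))) (fc, xc, y) \<longleftrightarrow> follows_from_code w k fc xc y"
proof -
  have list_encode_tl: "list_encode (tl (list_decode x)) = ltl x" for x
    by (metis list_decode_inverse list_decode_ltl)
  have list_encode_Cons_decode: "list_encode (a # list_decode x) = lcons a x" for a x
    by (metis list_encode_Cons list_decode_inverse)
  have nth_list_decode: "i < llen x \<Longrightarrow> list_decode x ! i = lnth x i" for i x
    by (simp add: llen_eq_length lnth_eq_nth)
  note rw = mem_take_judgements_iff[OF k] bex_take_judgements_iff[OF k] list_encode_tl
    list_encode_Cons_decode list_encode_Cons_decode[of _ "ltl _", unfolded list_decode_ltl]
    lhd_eq_hd[symmetric] llen_eq_length[symmetric]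
  consider "pfst fc = 0" | "pfst fc = 1" | "pfst fc = 2" | "pfst fc = 3" | "pfst fc = 4" | "5 \<le> pfst fc"
    by linarith
  then show ?thesis
  proof cases
    case 1
    then show ?thesis by (simp add: follows_from_def follows_from_code_def)
  next
    case 2
    then show ?thesis by (auto simp: follows_from_def follows_from_code_def rw)
  next
    case 3
    then show ?thesis by (auto simp: follows_from_def follows_from_code_def rw nth_list_decode)
  next
    case 4
    have "(\<forall>i<llen (psnd (psnd fc)).
            (list_decode (psnd (psnd fc)) ! i, xc, list_decode (jarg w k') ! i) \<in> set (take k (judgements w)))
       \<longleftrightarrow> (\<forall>i<llen (psnd (psnd fc)). occurs_before w k (lnth (psnd (psnd fc)) i) xc (lnth (jarg w k') i))"
      if "llen (jarg w k') = llen (psnd (psnd fc))" for k'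
      using that by (simp add: rw nth_list_decode)
    then show ?thesis using 4 by (simp add: follows_from_def follows_from_code_def rw) blast
  next
    case 5
    show ?thesis
    proof (cases "xc = 0")
      case True
      then show ?thesis using 5 by (simp add: follows_from_def follows_from_code_def)
    next
      case False
      then obtain a r where xc: "xc = lcons a r" by (metis lcons_lhd_ltl)
      show ?thesis using 5 unfolding xc
        by (simp add: follows_from_def follows_from_code_def rw list_encode_Cons del: list_encode.simps(2))
    qed
  next
    case 6
    then show ?thesis by (simp add: follows_from_def follows_from_code_def rw list_encode_Cons del: list_encode.simps(2))
  qed
qed

definition derivation_code :: "nat \<Rightarrow> bool" where
  "derivation_code w \<longleftrightarrow> (\<forall>k<llen w. follows_from_code w k (jfun w k) (jarg w k) (jval w k))"

lemma derivation_judgements_iff: "derivation (judgements w) \<longleftrightarrow> derivation_code w"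
  unfolding derivation_def derivation_code_def length_judgements
  by (auto simp: judgements_nth follows_from_code_iff[symmetric])

definition certifies :: "nat \<Rightarrow> nat \<Rightarrow> bool" where
  "certifies e w \<longleftrightarrow> derivation_code w \<and> occurs_before w (llen w) e (lcons e 0) 0"

lemma self_zero_iff_certified: "self_zero e \<longleftrightarrow> (\<exists>w. certifies e w)"
proof -
  have occ: "(e, list_encode [e], 0) \<in> set (judgements w) \<longleftrightarrow> occurs_before w (llen w) e (lcons e 0) 0" for w
    using mem_take_judgements_iff[of "llen w" w e "list_encode [e]" 0]
    by (simp add: length_judgements list_encode_Cons del: list_encode.simps(2))
  show ?thesis
  proof
    assume "self_zero e"
    then obtain L where "derivation L" "(e, list_encode [e], 0) \<in> set L"
      unfolding self_zero_def derivable_def by blast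
    then show "\<exists>w. certifies e w" unfolding certifies_def
      using occ[of "list_encode (map triple_encode L)"] derivation_judgements_iff[of "list_encode (map triple_encode L)"]
      by (auto simp: judgements_list_encode)
  next
    assume "\<exists>w. certifies e w"
    then show "self_zero e" unfolding self_zero_def derivable_def certifies_def
      using occ derivation_judgements_iff by blast
  qed
qed

lemma decidable_occurs_before [computable_intros]:
  "computable N a \<Longrightarrow> computable N b \<Longrightarrow> computable N c \<Longrightarrow> computable N d \<Longrightarrow> computable N e \<Longrightarrow>
    decidable N (\<lambda>xs. occurs_before (a xs) (b xs) (c xs) (d xs) (e xs))"
proof (rule decidable_compose5)
  show "decidable 5 (\<lambda>xs. occurs_before (xs ! 0) (xs ! 1) (xs ! 2) (xs ! 3) (xs ! 4))"
    unfolding occurs_before_def by (intro computable_intros; simp)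
qed

lemma computable_jfun [computable_intros]:
  "computable N a \<Longrightarrow> computable N b \<Longrightarrow> computable N (\<lambda>xs. jfun (a xs) (b xs))"
  unfolding jfun_def by (intro computable_intros)

lemma computable_jarg [computable_intros]:
  "computable N a \<Longrightarrow> computable N b \<Longrightarrow> computable N (\<lambda>xs. jarg (a xs) (b xs))"
  unfolding jarg_def by (intro computable_intros)

lemma computable_jval [computable_intros]:
  "computable N a \<Longrightarrow> computable N b \<Longrightarrow> computable N (\<lambda>xs. jval (a xs) (b xs))"
  unfolding jval_def by (intro computable_intros)

lemma decidable_certifies: "decidable 2 (\<lambda>xs. certifies (xs ! 0) (xs ! 1))"
proof -
  have step: "decidable 5 (\<lambda>xs. follows_from_code (xs ! 0) (xs ! 1) (xs ! 2) (xs ! 3) (xs ! 4))"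
    unfolding follows_from_code_def by (intro computable_intros; simp)
  have derivation: "decidable 1 (\<lambda>xs. derivation_code (xs ! 0))"
    unfolding derivation_code_def by (intro computable_intros decidable_compose5[OF step]; simp)
  show ?thesis
    unfolding certifies_def by (intro computable_intros decidable_compose1[OF derivation]; simp)
qed

section \<open>A diagonal set that is profinitely closed\<close>

lemma not_decidable_self_zero: "\<not> decidable 1 (\<lambda>xs. self_zero (xs ! 0))"
proof
  assume "decidable 1 (\<lambda>xs. self_zero (xs ! 0))"
  then obtain c where "computes 1 c (\<lambda>xs. if self_zero (xs ! 0) then 1 else 0)"
    unfolding decidable_def computable_def by blast
  then have c: "eval c [recf_code c] (if self_zero (recf_code c) then 1 else 0)"
    unfolding computes_def by (metis length_Cons list.size(3) nth_Cons_0 One_nat_def)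
  show False
  proof (cases "self_zero (recf_code c)")
    case True
    then have "eval c [recf_code c] 0" by (simp add: self_zero_recf_code)
    with True c show False using eval_deterministic by fastforce
  next
    case False
    with c show False by (simp add: self_zero_recf_code)
  qed
qed

fun odd_prod :: "nat \<Rightarrow> nat" where
  "odd_prod 0 = 1"
| "odd_prod (Suc m) = odd_prod m * (2 * m + 1)"

lemma odd_odd_prod: "odd (odd_prod n)"
  by (induction n) auto

lemma odd_prod_pos: "1 \<le> odd_prod n"
  by (induction n) auto

lemma le_odd_prod: "n \<le> odd_prod n"
proof (induction n)
  case (Suc m)
  have "Suc m \<le> 1 * (2 * m + 1)" by simp
  also have "\<dots> \<le> odd_prod m * (2 * m + 1)" using odd_prod_pos[of m] by (intro mult_right_mono) auto
  finally show ?case by simp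
qed simp

lemma odd_prod_dvd: "m \<le> n \<Longrightarrow> odd_prod m dvd odd_prod n"
  by (induction n) (auto simp: le_Suc_eq)

lemma odd_prod_mono: "m \<le> n \<Longrightarrow> odd_prod m \<le> odd_prod n"
  using odd_prod_pos[of n] by (intro dvd_imp_le[OF odd_prod_dvd]) auto

lemma computable_odd_prod [computable_intros]:
  assumes "computable N f" shows "computable N (\<lambda>xs. odd_prod (f xs))"
proof -
  have "computable (Suc 0)
      (\<lambda>xs. rec_nat 1 (\<lambda>m y. (m # y # tl xs) ! 1 * (2 * (m # y # tl xs) ! 0 + 1)) (xs ! 0))"
    by (rule computable_rec_nat[OF computable_const]) (intro computable_intros; simp)
  moreover have "rec_nat 1 (\<lambda>m y. y * (2 * m + 1)) n = odd_prod n" for n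
    by (induction n) auto
  ultimately have "computable 1 (\<lambda>xs. odd_prod (xs ! 0))" by simp
  from computable_compose1[OF this assms] show ?thesis .
qed

text \<open>The factor 2^e records e; the odd factor is divisible by odd_prod K whenever K \<le> e + w,
  which is what makes the set closed.\<close>

definition witness_number :: "nat \<Rightarrow> nat \<Rightarrow> nat" where
  "witness_number e w = 2 ^ e * odd_prod (e + w)"

definition diag_set :: "int set" where
  "diag_set = insert 0 {int (witness_number e w) | e w. certifies e w}"

lemma witness_number_ge: "e \<le> witness_number e w" "w \<le> witness_number e w"
proof -
  have "e < 2 ^ e" by simp
  also have "2 ^ e \<le> witness_number e w"
    unfolding witness_number_def using odd_prod_pos by simp
  finally show "e \<le> witness_number e w" by simp
  have "w \<le> odd_prod (e + w)" using le_odd_prod[of "e + w"] by simp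
  also have "\<dots> \<le> witness_number e w" unfolding witness_number_def by simp
  finally show "w \<le> witness_number e w" .
qed

lemma recursive_diag_set: "recursive_int_set diag_set"
proof -
  have bounded: "(\<exists>e w. certifies e w \<and> witness_number e w = n) \<longleftrightarrow>
      (\<exists>e<Suc n. \<exists>w<Suc n. certifies e w \<and> witness_number e w = n)" for n
    using witness_number_ge by (metis le_imp_less_Suc)
  have "int_decode k \<in> diag_set \<longleftrightarrow>
      even k \<and> (k div 2 = 0 \<or> (\<exists>e w. certifies e w \<and> witness_number e w = k div 2))" for k
  proof -
    have "int_decode k = (if even k then int (k div 2) else - int (k div 2) - 1)"
      by (simp add: int_decode_def sum_decode_def)
    then show ?thesis unfolding diag_set_def by force
  qed
  then have mem: "int_decode k \<in> diag_set \<longleftrightarrow> even k \<and> (k div 2 = 0 \<or>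
      (\<exists>e<Suc (k div 2). \<exists>w<Suc (k div 2). certifies e w \<and> witness_number e w = k div 2))" for k
    by (simp only: bounded)
  have "decidable 1 (\<lambda>xs. even (xs ! 0) \<and> (xs ! 0 div 2 = 0 \<or>
      (\<exists>e<Suc (xs ! 0 div 2). \<exists>w<Suc (xs ! 0 div 2). certifies e w \<and> witness_number e w = xs ! 0 div 2)))"
    unfolding even_iff_mod_2_eq_zero witness_number_def
    by (intro computable_intros decidable_compose2[OF decidable_certifies]; simp)
  then show ?thesis
    unfolding recursive_int_set_def recursive_fun_iff_computable decidable_def mem .
qed

lemma profinite_closed_if_dvd_or_bounded:
  fixes A :: "int set"
  assumes "0 \<in> A" and dvd_or_bounded: "\<And>N. \<exists>Q B. N < Q \<and> (\<forall>a\<in>A. Q dvd a \<or> \<bar>a\<bar> \<le> B)"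
  shows "profinite_closed A"
  unfolding profinite_closed_def profinite_open_def
proof
  fix x assume "x \<in> - A"
  then have x: "x \<notin> A" "x \<noteq> 0" using assms(1) by auto
  obtain Q B where Q: "\<bar>x\<bar> < Q" and A: "\<forall>a\<in>A. Q dvd a \<or> \<bar>a\<bar> \<le> B"
    using dvd_or_bounded by blast
  define P where "P = Q * (\<bar>x\<bar> + \<bar>B\<bar> + 1)"
  have P: "\<bar>x\<bar> + \<bar>B\<bar> + 1 \<le> P"
    unfolding P_def using Q by (simp add: mult_le_cancel_right1 add_nonneg_eq_0_iff) linarith
  have "x + P * k \<notin> A" for k
  proof
    assume a: "x + P * k \<in> A"
    have "\<not> Q dvd x + P * k"
    proof
      assume "Q dvd x + P * k"
      moreover have "Q dvd P * k" unfolding P_def by simp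
      ultimately have "Q dvd x" by (metis dvd_add_left_iff)
      then have "\<bar>Q\<bar> \<le> \<bar>x\<bar>" using dvd_imp_le_int[OF x(2)] by blast
      with Q show False by linarith
    qed
    then have "\<bar>x + P * k\<bar> \<le> B" using A a by blast
    moreover have "\<bar>P * k\<bar> \<le> \<bar>x + P * k\<bar> + \<bar>x\<bar>" using abs_triangle_ineq4[of "x + P * k" x] by simp
    ultimately have "P * \<bar>k\<bar> < P * 1" using P by (simp add: abs_mult)
    moreover have "0 < P" using P by linarith
    ultimately have "\<bar>k\<bar> < 1" by (simp only: mult_less_cancel_left_pos)
    then have "k = 0" by simp
    with a x(1) show False by simp
  qed
  then show "\<exists>m p. 1 \<le> p \<and> x \<in> {m + p * k |k. True} \<and> {m + p * k |k. True} \<subseteq> - A"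
    using P by (intro exI[of _ x] exI[of _ P]) (auto intro: exI[of _ 0])
qed

lemma diag_set_dvd_or_bounded:
  "a \<in> diag_set \<Longrightarrow> int (odd_prod K) dvd a \<or> \<bar>a\<bar> \<le> int (2 ^ K * odd_prod K)"
proof (cases "a = 0")
  case False
  assume "a \<in> diag_set"
  with False obtain e w where a: "a = int (witness_number e w)" unfolding diag_set_def by blast
  show ?thesis
  proof (cases "K \<le> e + w")
    case True
    then have "odd_prod K dvd witness_number e w"
      unfolding witness_number_def by (intro dvd_mult odd_prod_dvd)
    then show ?thesis unfolding a by (simp add: of_nat_dvd_iff)
  next
    case False
    then have "witness_number e w \<le> 2 ^ K * odd_prod K" unfolding witness_number_def
      by (intro mult_le_mono power_increasing odd_prod_mono) auto
    then show ?thesis unfolding a by linarith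
  qed
qed simp

lemma profinite_closed_diag_set: "profinite_closed diag_set"
proof (rule profinite_closed_if_dvd_or_bounded)
  show "0 \<in> diag_set" by (simp add: diag_set_def)
  fix N :: int
  have "N < int (odd_prod (nat N + 1))" using le_odd_prod[of "nat N + 1"] by linarith
  then show "\<exists>Q B. N < Q \<and> (\<forall>a\<in>diag_set. Q dvd a \<or> \<bar>a\<bar> \<le> B)"
    using diag_set_dvd_or_bounded by blast
qed

lemma pow2_times_odd_eq_imp_eq: "2 ^ a * (u::nat) = 2 ^ b * v \<Longrightarrow> odd u \<Longrightarrow> odd v \<Longrightarrow> a = b"
proof (induction a arbitrary: b)
  case 0
  then show ?case by (cases b) auto
next
  case (Suc a)
  then show ?case by (cases b) auto
qed

lemma witness_number_mod_iff: "witness_number e' w mod 2 ^ (e + 1) = 2 ^ e \<longleftrightarrow> e' = e"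
proof
  assume h: "witness_number e' w mod 2 ^ (e + 1) = 2 ^ e"
  define t where "t = witness_number e' w div 2 ^ (e + 1)"
  have "witness_number e' w = 2 ^ (e + 1) * t + 2 ^ e"
    using h unfolding t_def by (metis div_mult_mod_eq mult.commute)
  then have "2 ^ e' * odd_prod (e' + w) = 2 ^ e * (2 * t + 1)"
    unfolding witness_number_def by (simp add: algebra_simps)
  then show "e' = e" by (rule pow2_times_odd_eq_imp_eq) (simp_all add: odd_odd_prod)
next
  assume "e' = e"
  obtain t where "odd_prod (e + w) = 2 * t + 1" using odd_odd_prod by (metis oddE)
  then have "witness_number e w = 2 ^ (e + 1) * t + 2 ^ e"
    unfolding witness_number_def by (simp add: algebra_simps)
  then show "witness_number e' w mod 2 ^ (e + 1) = 2 ^ e" using \<open>e' = e\<close> by simp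
qed

lemma finite_res_mod: "finite (res_mod A n)"
  by (rule finite_subset[of _ "{0..n - 1}"]) (auto simp: res_mod_def)

lemma nat_image_res_mod_iff: "k \<in> nat ` res_mod A n \<longleftrightarrow> int k \<in> res_mod A n"
proof
  assume "k \<in> nat ` res_mod A n"
  then obtain r where "r \<in> res_mod A n" "k = nat r" by blast
  moreover from this have "0 \<le> r" by (simp add: res_mod_def)
  ultimately show "int k \<in> res_mod A n" by simp
next
  assume "int k \<in> res_mod A n"
  then show "k \<in> nat ` res_mod A n" by (rule image_eqI[rotated]) simp
qed

lemma res_mod_diag_set_iff: "int (2 ^ e) \<in> res_mod diag_set (int (2 ^ (e + 1))) \<longleftrightarrow> (\<exists>w. certifies e w)"
proof -
  let ?m = "int (2 ^ (e + 1))"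
  have int_mod_iff: "int n mod ?m = int (2 ^ e) \<longleftrightarrow> n mod 2 ^ (e + 1) = 2 ^ e" for n
    by (metis of_nat_eq_iff of_nat_mod)
  have "0 mod ?m \<noteq> int (2 ^ e)" by simp
  then have "(\<exists>x\<in>diag_set. x mod ?m = int (2 ^ e)) \<longleftrightarrow>
      (\<exists>e' w. certifies e' w \<and> int (witness_number e' w) mod ?m = int (2 ^ e))"
    unfolding diag_set_def by blast
  moreover have "int (2 ^ e) \<in> {0..?m - 1}" by simp
  ultimately show ?thesis
    unfolding res_mod_def by (simp only: mem_Collect_eq int_mod_iff witness_number_mod_iff) blast
qed

lemma not_res_mod_map_recursive_diag_set: "\<not> res_mod_map_recursive diag_set"
proof
  assume "res_mod_map_recursive diag_set"
  then obtain f where f: "computable 1 (\<lambda>xs. f (xs ! 0))"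
    and res: "\<And>n. 1 \<le> n \<Longrightarrow> f n = set_encode (nat ` res_mod diag_set (int n))"
    unfolding res_mod_map_recursive_def recursive_fun_iff_computable by blast
  have "self_zero e \<longleftrightarrow> odd (f (2 ^ (e + 1)) div 2 ^ (2 ^ e))" for e
  proof -
    have "odd (f (2 ^ (e + 1)) div 2 ^ (2 ^ e)) \<longleftrightarrow> 2 ^ e \<in> set_decode (f (2 ^ (e + 1)))"
      by (simp add: set_decode_def)
    also have "\<dots> \<longleftrightarrow> int (2 ^ e) \<in> res_mod diag_set (int (2 ^ (e + 1)))"
      using res[of "2 ^ (e + 1)"] by (simp add: finite_res_mod nat_image_res_mod_iff)
    finally show ?thesis using res_mod_diag_set_iff[of e] by (simp add: self_zero_iff_certified)
  qed
  moreover have "decidable 1 (\<lambda>xs. odd (f (2 ^ (xs ! 0 + 1)) div 2 ^ (2 ^ xs ! 0)))"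
    unfolding even_iff_mod_2_eq_zero
    by (intro computable_intros computable_compose1[OF f]; simp)
  ultimately show False using not_decidable_self_zero by simp
qed

theorem mainTheorem19:
  shows "\<exists>A :: int set. recursive_int_set A \<and> profinite_closed A \<and> \<not> res_mod_map_recursive A"
  using recursive_diag_set profinite_closed_diag_set not_res_mod_map_recursive_diag_set by blast

end
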